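(* Let $r\geq 2$ and let $G$ be a $K_{r+1}$-free graph with $n$ vertices and $m\geq 1$ edges. Then \[ \lambda_n(G)\geq \frac{2mn}{(r-1)(n^2-2m)}, \] with equality if and only if $G$ is a regular complete $r$-partite graph, i.e. a complete $r$-partite graph all of whose $r$ parts have size $n/r$.
   Context: All graphs are finite, simple and undirected. For a graph $G$ of order $n$, $A(G)$ is its adjacency matrix, $D(G)$ the diagonal matrix of its vertex degrees, and $L(G)=D(G)-A(G)$ its Laplacian; the eigenvalues of $L(G)$ are $0=\lambda_1(G)\leq\dots\leq\lambda_n(G)$, so $\lambda_n(G)$ is the largest Laplacian eigenvalue. $K_{r+1}$ denotes the complete graph on $r+1$ vertices; $G$ is $K_{r+1}$-free if it contains no subgraph isomorphic to $K_{r+1}$. *)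

theory Defs
  imports "HOL-Analysis.Analysis"
begin

definition simple_graph :: "('n \<Rightarrow> 'n \<Rightarrow> bool) \<Rightarrow> bool" where
  "simple_graph E \<longleftrightarrow> (\<forall>u v. E u v \<longrightarrow> E v u) \<and> (\<forall>u. \<not> E u u)"

definition edges :: "('n \<Rightarrow> 'n \<Rightarrow> bool) \<Rightarrow> 'n set set" where
  "edges E = {{u, v} | u v. E u v}"

definition degree :: "('n::finite \<Rightarrow> 'n \<Rightarrow> bool) \<Rightarrow> 'n \<Rightarrow> nat" where
  "degree E u = card {v. E u v}"

definition adjacency_matrix :: "('n::finite \<Rightarrow> 'n \<Rightarrow> bool) \<Rightarrow> real^'n^'n" where
  "adjacency_matrix E = (\<chi> i j. if E i j then 1 else 0)"

definition degree_matrix :: "('n::finite \<Rightarrow> 'n \<Rightarrow> bool) \<Rightarrow> real^'n^'n" where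
  "degree_matrix E = (\<chi> i j. if i = j then real (degree E i) else 0)"

definition laplacian :: "('n::finite \<Rightarrow> 'n \<Rightarrow> bool) \<Rightarrow> real^'n^'n" where
  "laplacian E = degree_matrix E - adjacency_matrix E"

definition is_eigenvalue :: "real^'n^'n \<Rightarrow> real \<Rightarrow> bool" where
  "is_eigenvalue A mu \<longleftrightarrow> (\<exists>x. x \<noteq> 0 \<and> A *v x = mu *\<^sub>R x)"

definition lap_largest_eig :: "('n::finite \<Rightarrow> 'n \<Rightarrow> bool) \<Rightarrow> real" where
  "lap_largest_eig E = Max {mu. is_eigenvalue (laplacian E) mu}"

definition contains_clique :: "('n \<Rightarrow> 'n \<Rightarrow> bool) \<Rightarrow> nat \<Rightarrow> bool" where
  "contains_clique E k \<longleftrightarrow> (\<exists>S. finite S \<and> card S = k \<and> (\<forall>u\<in>S. \<forall>v\<in>S. u \<noteq> v \<longrightarrow> E u v))"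

definition regular_complete_multipartite :: "('n::finite \<Rightarrow> 'n \<Rightarrow> bool) \<Rightarrow> nat \<Rightarrow> bool" where
  "regular_complete_multipartite E r \<longleftrightarrow>
     (\<exists>f :: 'n \<Rightarrow> nat. (\<forall>v. f v < r) \<and>
        (\<forall>u v. E u v \<longleftrightarrow> f u \<noteq> f v) \<and>
        (\<forall>i<r. real (card {v. f v = i}) = real CARD('n) / real r))"

end

theory Submission
  imports Defs
begin

text \<open>
  For a vertex \<open>u\<close> of degree \<open>d(u)\<close> let \<open>x\<^sub>u\<close> be the indicator vector of its neighbourhood
  \<open>N(u)\<close> minus its mean. The Laplacian quadratic form of \<open>x\<^sub>u\<close> counts the edges leaving \<open>N(u)\<close>,
  and \<open>|x\<^sub>u|\<^sup>2 = d(u) (n - d(u)) / n\<close>, so by the Rayleigh principle at most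
  \<open>\<lambda>\<^sub>n d(u) (n - d(u)) / n\<close> edges leave \<open>N(u)\<close>. Summed over \<open>u\<close>, these edges number
  \<open>\<Sum> d(u)\<^sup>2\<close> minus the degree sums inside the neighbourhoods. The neighbourhoods are
  \<open>K\<^sub>r\<close>-free, so by Turan's theorem the latter are at most \<open>(r-2)/(r-1) \<Sum> d(u)\<^sup>2\<close>, and
  Cauchy-Schwarz, \<open>n \<Sum> d(u)\<^sup>2 \<ge> (2m)\<^sup>2\<close>, yields the bound. The same counting, with the trivial
  bound \<open>d(u) (n - d(u))\<close> on the edges leaving \<open>N(u)\<close>, proves Turan's theorem itself by
  induction on the clique number.

  In the case of equality the graph is regular and every \<open>x\<^sub>u\<close> is an eigenvector for \<open>\<lambda>\<^sub>n\<close>.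
  The eigenvalue equation at \<open>u\<close> gives \<open>\<lambda>\<^sub>n = n\<close>, and at a non-neighbour \<open>w\<close> of \<open>u\<close> it gives
  \<open>N(u) \<subseteq> N(w)\<close>. So non-adjacency is an equivalence relation, and its classes, of size
  \<open>n - d = n / r\<close>, are the parts of a regular complete \<open>r\<close>-partite graph.
\<close>

section \<open>The Rayleigh principle for symmetric matrices\<close>

lemma inner_symmetric_matrix:
  fixes A :: "real^'n^'n"
  assumes "transpose A = A"
  shows "x \<bullet> (A *v y) = (A *v x) \<bullet> y"
  by (metis assms dot_lmul_matrix vector_transpose_matrix)

lemma psd_form_eq_0_imp_mult_eq_0:
  fixes M :: "real^'n^'n"
  assumes sym: "transpose M = M"
    and psd: "\<And>y. 0 \<le> y \<bullet> (M *v y)"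
    and zero: "x \<bullet> (M *v x) = 0"
  shows "M *v x = 0"
proof (rule ccontr)
  define y where "y = M *v x"
  define c where "c = y \<bullet> (M *v y)"
  define t where "t = (y \<bullet> y) / (c + 1)"
  assume "M *v x \<noteq> 0"
  then have yy: "y \<bullet> y > 0" by (simp add: y_def)
  have c: "c \<ge> 0" using psd by (simp add: c_def)
  then have t: "t > 0" "t * c < y \<bullet> y"
    using yy by (simp_all add: t_def field_simps)
  \<comment> \<open>along the direction \<open>y = M x\<close> the form decreases to first order\<close>
  have "(x - t *\<^sub>R y) \<bullet> (M *v (x - t *\<^sub>R y)) = t * (t * c - 2 * (y \<bullet> y))"
    using zero inner_symmetric_matrix[OF sym, of x y]
    by (simp add: c_def y_def algebra_simps)
  also have "\<dots> < 0"
    using t yy mult_pos_neg[of t "t * c - 2 * (y \<bullet> y)"] by linarith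
  finally show False using psd by (meson not_le)
qed

lemma symmetric_form_le_eq_imp_eigenvector:
  fixes A :: "real^'n^'n"
  assumes sym: "transpose A = A"
    and le: "\<And>y. y \<bullet> (A *v y) \<le> R * (y \<bullet> y)"
    and eq: "x \<bullet> (A *v x) = R * (x \<bullet> x)"
  shows "A *v x = R *\<^sub>R x"
proof -
  define M where "M = R *\<^sub>R mat 1 - A"
  have Mv: "M *v y = R *\<^sub>R y - A *v y" for y
    by (simp add: M_def matrix_vector_mult_diff_rdistrib scaleR_matrix_vector_assoc[symmetric])
  have "transpose M = M"
    using sym by (simp add: M_def transpose_def vec_eq_iff mat_def)
  then have "M *v x = 0"
    by (rule psd_form_eq_0_imp_mult_eq_0) (use le eq in \<open>simp_all add: Mv inner_diff_right\<close>)
  then show ?thesis by (simp add: Mv)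
qed

lemma finite_eigenvalues_symmetric:
  fixes A :: "real^'n^'n"
  assumes sym: "transpose A = A"
  shows "finite {\<mu>. is_eigenvalue A \<mu>}"
proof -
  define S where "S = {\<mu>. is_eigenvalue A \<mu>}"
  define v where "v \<mu> = (SOME x. x \<noteq> 0 \<and> A *v x = \<mu> *\<^sub>R x)" for \<mu>
  have v: "v \<mu> \<noteq> 0" "A *v v \<mu> = \<mu> *\<^sub>R v \<mu>" if "\<mu> \<in> S" for \<mu>
    using that someI_ex[of "\<lambda>x. x \<noteq> 0 \<and> A *v x = \<mu> *\<^sub>R x"]
    by (auto simp: S_def v_def is_eigenvalue_def)
  have orth: "v \<mu> \<bullet> v \<nu> = 0" if "\<mu> \<in> S" "\<nu> \<in> S" "\<mu> \<noteq> \<nu>" for \<mu> \<nu>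
  proof -
    have "\<mu> * (v \<mu> \<bullet> v \<nu>) = \<nu> * (v \<mu> \<bullet> v \<nu>)"
      using inner_symmetric_matrix[OF sym, of "v \<mu>" "v \<nu>"] v[OF that(1)] v[OF that(2)] by auto
    then show ?thesis using that(3) by auto
  qed
  have "inj_on v S"
    by (rule inj_onI) (metis orth v(1) inner_eq_zero_iff)
  moreover have "independent (v ` S)"
    by (rule pairwise_orthogonal_independent) (auto simp: pairwise_def orthogonal_def v(1), metis orth)
  then have "finite (v ` S)"
    by (rule finiteI_independent)
  ultimately show ?thesis
    using finite_imageD S_def by blast
qed

lemma symmetric_Max_eigenvalue:
  fixes A :: "real^'n^'n"
  assumes sym: "transpose A = A"
  defines "R \<equiv> Max {\<mu>. is_eigenvalue A \<mu>}"
  shows "is_eigenvalue A R" and "x \<bullet> (A *v x) \<le> R * (x \<bullet> x)"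
proof -
  define q where "q x = x \<bullet> (A *v x)" for x :: "real^'n"
  have "continuous_on (sphere 0 1) q"
    unfolding q_def by (intro continuous_intros linear_continuous_on bounded_linear_intros)
  then obtain x0 where x0: "x0 \<in> sphere 0 1" and max: "\<And>y. y \<in> sphere 0 1 \<Longrightarrow> q y \<le> q x0"
    using continuous_attains_sup[OF compact_sphere, of 0 1 q] by auto
  have le: "y \<bullet> (A *v y) \<le> q x0 * (y \<bullet> y)" for y
  proof (cases "y = 0")
    case False
    then have "q ((1 / norm y) *\<^sub>R y) \<le> q x0" by (intro max) simp
    then show ?thesis
      using False by (simp add: q_def matrix_vector_mult_scaleR dot_square_norm power2_eq_square divide_le_eq)
  qed simp
  have "x0 \<bullet> x0 = 1" using x0 by (simp add: dot_square_norm)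
  then have "A *v x0 = q x0 *\<^sub>R x0"
    by (intro symmetric_form_le_eq_imp_eigenvector[OF sym le]) (simp add: q_def)
  moreover have "x0 \<noteq> 0" using x0 by auto
  ultimately have eig: "is_eigenvalue A (q x0)"
    unfolding is_eigenvalue_def by blast
  have "\<mu> \<le> q x0" if \<mu>: "is_eigenvalue A \<mu>" for \<mu>
  proof -
    obtain y where "y \<noteq> 0" "A *v y = \<mu> *\<^sub>R y" using \<mu> by (auto simp: is_eigenvalue_def)
    then show ?thesis using le[of y] by simp
  qed
  then have "R = q x0"
    unfolding R_def using eig finite_eigenvalues_symmetric[OF sym] by (intro Max_eqI) auto
  then show "is_eigenvalue A R" "x \<bullet> (A *v x) \<le> R * (x \<bullet> x)"
    using eig le by simp_all
qed

section \<open>Degree sums over neighbourhoods and Turan's theorem\<close>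

definition neighbours :: "('a \<Rightarrow> 'a \<Rightarrow> bool) \<Rightarrow> 'a set \<Rightarrow> 'a \<Rightarrow> 'a set" where
  "neighbours E W u = {v \<in> W. E u v}"

definition degree_in :: "('a \<Rightarrow> 'a \<Rightarrow> bool) \<Rightarrow> 'a set \<Rightarrow> 'a \<Rightarrow> real" where
  "degree_in E W u = (\<Sum>v\<in>W. of_bool (E u v))"

lemma sum_neighbours:
  fixes f :: "'a \<Rightarrow> real"
  shows "finite W \<Longrightarrow> (\<Sum>v\<in>neighbours E W u. f v) = (\<Sum>v\<in>W. of_bool (E u v) * f v)"
  by (simp add: neighbours_def Int_def)

lemma degree_in_eq_card: "finite W \<Longrightarrow> degree_in E W u = real (card (neighbours E W u))"
  by (simp add: degree_in_def neighbours_def Int_def)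

lemma degree_eq_degree_in: "real (degree E u) = degree_in E UNIV u"
  by (simp add: degree_in_eq_card degree_def neighbours_def)

lemma degree_in_le_card: "finite W \<Longrightarrow> degree_in E W u \<le> real (card W)"
  by (simp add: degree_in_eq_card neighbours_def card_mono)

lemma degree_in_symmetric:
  "simple_graph E \<Longrightarrow> degree_in E W u = (\<Sum>v\<in>W. of_bool (E v u))"
  unfolding degree_in_def simple_graph_def by (auto intro!: sum.cong)

lemma sum_degree_eq_card_edges:
  fixes E :: "'n::finite \<Rightarrow> 'n \<Rightarrow> bool"
  assumes "simple_graph E"
  shows "(\<Sum>u\<in>UNIV. real (degree E u)) = 2 * real (card (edges E))"
proof -
  define P where "P = {(u, v). E u v}"
  have "(\<Sum>u\<in>UNIV. degree E u) = card (SIGMA u:UNIV. {v. E u v})"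
    by (simp add: degree_def)
  also have "(SIGMA u:UNIV. {v. E u v}) = P"
    by (auto simp: P_def)
  also have "card P = (\<Sum>e\<in>edges E. card {p \<in> P. (\<lambda>(u, v). {u, v}) p = e})"
  proof -
    have "(\<lambda>(u, v). {u, v}) ` P \<subseteq> edges E" by (auto simp: P_def edges_def)
    then show ?thesis
      using sum.group[of P "edges E" "\<lambda>(u, v). {u, v}" "\<lambda>_. 1::nat"] by simp
  qed
  also have "\<dots> = (\<Sum>e\<in>edges E. 2)"
  proof (rule sum.cong)
    fix e assume "e \<in> edges E"
    then obtain a b where e: "e = {a, b}" and ab: "E a b" by (auto simp: edges_def)
    have "E b a" "a \<noteq> b" using ab assms by (auto simp: simple_graph_def)
    with ab have "{p \<in> P. (\<lambda>(u, v). {u, v}) p = {a, b}} = {(a, b), (b, a)}"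
      by (auto simp: P_def doubleton_eq_iff)
    then show "card {p \<in> P. (\<lambda>(u, v). {u, v}) p = e} = 2"
      using \<open>a \<noteq> b\<close> e by simp
  qed simp
  finally have "(\<Sum>u\<in>UNIV. degree E u) = 2 * card (edges E)" by simp
  then show ?thesis by (simp flip: of_nat_sum)
qed

lemma sum_degree_less_card_sq:
  fixes E :: "'n::finite \<Rightarrow> 'n \<Rightarrow> bool"
  assumes "simple_graph E"
  shows "(\<Sum>u\<in>UNIV. real (degree E u)) < (real CARD('n))\<^sup>2"
proof -
  have "degree E u < CARD('n)" for u
    using assms unfolding degree_def simple_graph_def by (intro psubset_card_mono) auto
  then have "real (Suc (degree E u)) \<le> real CARD('n)" for u
    by (simp only: of_nat_le_iff Suc_le_eq)
  then have "real (degree E u) \<le> real CARD('n) - 1" for u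
    by (simp add: algebra_simps)
  then have "(\<Sum>u\<in>UNIV. real (degree E u)) \<le> (\<Sum>u\<in>(UNIV::'n set). real CARD('n) - 1)"
    by (intro sum_mono)
  then have "(\<Sum>u\<in>UNIV. real (degree E u)) \<le> real CARD('n) * real CARD('n) - real CARD('n)"
    by (simp add: algebra_simps)
  moreover have "0 < real CARD('n)" by simp
  ultimately show ?thesis
    unfolding power2_eq_square by linarith
qed

lemma sum_neighbourhood_cuts:
  assumes "finite W" "simple_graph E"
  shows "(\<Sum>u\<in>W. \<Sum>a\<in>neighbours E W u. degree_in E (W - neighbours E W u) a)
    = (\<Sum>u\<in>W. (degree_in E W u)\<^sup>2)
      - (\<Sum>u\<in>W. \<Sum>a\<in>neighbours E W u. degree_in E (neighbours E W u) a)"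
proof -
  have "degree_in E (W - neighbours E W u) a
      = degree_in E W a - degree_in E (neighbours E W u) a" for u a
    unfolding degree_in_def using assms(1) by (intro sum_diff) (auto simp: neighbours_def)
  moreover have "(\<Sum>u\<in>W. \<Sum>a\<in>neighbours E W u. degree_in E W a) = (\<Sum>a\<in>W. (degree_in E W a)\<^sup>2)"
  proof -
    have "(\<Sum>u\<in>W. \<Sum>a\<in>neighbours E W u. degree_in E W a)
        = (\<Sum>u\<in>W. \<Sum>a\<in>W. of_bool (E u a) * degree_in E W a)"
      using assms(1) by (simp only: sum_neighbours)
    also have "\<dots> = (\<Sum>a\<in>W. (\<Sum>u\<in>W. of_bool (E u a)) * degree_in E W a)"
      by (simp only: sum_distrib_right) (rule sum.swap)
    also have "\<dots> = (\<Sum>a\<in>W. (degree_in E W a)\<^sup>2)"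
      by (simp only: degree_in_symmetric[OF assms(2), symmetric] power2_eq_square)
    finally show ?thesis .
  qed
  ultimately show ?thesis
    by (simp add: sum_subtractf)
qed

lemma sum_squared_deviation:
  fixes f :: "'a \<Rightarrow> real"
  assumes "finite A"
  shows "real (card A) * (\<Sum>x\<in>A. (f x - sum f A / real (card A))\<^sup>2)
    = real (card A) * (\<Sum>x\<in>A. (f x)\<^sup>2) - (sum f A)\<^sup>2"
proof (cases "A = {}")
  case False
  define m where "m = sum f A / real (card A)"
  have "(\<Sum>x\<in>A. (f x - m)\<^sup>2) = (\<Sum>x\<in>A. (f x)\<^sup>2) - 2 * m * sum f A + real (card A) * m\<^sup>2"
    by (simp add: power2_diff sum.distrib sum_subtractf flip: sum_distrib_left sum_distrib_right)
  moreover have "real (card A) > 0" using False assms by (simp add: card_gt_0_iff)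
  ultimately show ?thesis
    by (simp add: m_def field_simps power2_eq_square)
qed simp

text \<open>The two sums on the left are the defects of Cauchy-Schwarz for the degrees and of the
  cut bounds \<open>e(N(u), W - N(u)) \<le> \<mu> d(u) (N - d(u))\<close>.\<close>

lemma neighbourhood_cut_slack:
  fixes E :: "'a \<Rightarrow> 'a \<Rightarrow> bool" and W :: "'a set" and k \<mu> :: real
  defines "N \<equiv> real (card W)" and "d \<equiv> degree_in E W" and "D \<equiv> (\<Sum>u\<in>W. degree_in E W u)"
  assumes W: "finite W" and E: "simple_graph E"
    and inner: "\<And>u. u \<in> W \<Longrightarrow>
      k * (\<Sum>a\<in>neighbours E W u. degree_in E (neighbours E W u) a) \<le> (k - 1) * (d u)\<^sup>2"
  shows "N * (\<Sum>u\<in>W. (d u - D / N)\<^sup>2) * (1 + k * \<mu>)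
      + N * k * (\<Sum>u\<in>W. \<mu> * d u * (N - d u) - (\<Sum>a\<in>neighbours E W u. degree_in E (W - neighbours E W u) a))
    \<le> D * (k * \<mu> * N\<^sup>2 - D * (1 + k * \<mu>))"
proof -
  define c where "c u = (\<Sum>a\<in>neighbours E W u. degree_in E (W - neighbours E W u) a)" for u
  define T where "T u = (\<Sum>a\<in>neighbours E W u. degree_in E (neighbours E W u) a)" for u
  define Q where "Q = (\<Sum>u\<in>W. (d u)\<^sup>2)"
  define \<sigma> where "\<sigma> = (\<Sum>u\<in>W. \<mu> * d u * (N - d u) - c u)"
  define V where "V = (\<Sum>u\<in>W. (d u - D / N)\<^sup>2)"
  have "(\<Sum>u\<in>W. c u) = Q - (\<Sum>u\<in>W. T u)"
    unfolding c_def T_def Q_def d_def by (rule sum_neighbourhood_cuts[OF W E])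
  moreover have "k * (\<Sum>u\<in>W. T u) \<le> (k - 1) * Q"
    unfolding Q_def sum_distrib_left using inner by (intro sum_mono) (simp add: T_def)
  ultimately have "Q \<le> k * (\<Sum>u\<in>W. c u)"
    by (simp add: right_diff_distrib left_diff_distrib)
  also have "(\<Sum>u\<in>W. c u) = \<mu> * (D * N - Q) - \<sigma>"
    by (simp add: \<sigma>_def D_def Q_def d_def sum_subtractf sum.distrib sum_distrib_left sum_distrib_right
        power2_eq_square algebra_simps)
  finally have "Q * (1 + k * \<mu>) + k * \<sigma> \<le> k * \<mu> * D * N"
    by (simp add: algebra_simps)
  then have "N * (Q * (1 + k * \<mu>) + k * \<sigma>) \<le> N * (k * \<mu> * D * N)"
    by (intro mult_left_mono) (simp_all add: N_def)
  moreover have "N * V = N * Q - D\<^sup>2"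
    unfolding V_def Q_def D_def N_def d_def by (rule sum_squared_deviation[OF W])
  then have "N * (Q * (1 + k * \<mu>) + k * \<sigma>) = (D\<^sup>2 + N * V) * (1 + k * \<mu>) + N * k * \<sigma>"
    by (simp add: algebra_simps)
  ultimately show ?thesis
    unfolding \<sigma>_def V_def c_def by (simp add: power2_eq_square algebra_simps)
qed

lemma degree_sum_bound_by_neighbourhood_cuts:
  fixes E :: "'a \<Rightarrow> 'a \<Rightarrow> bool" and W :: "'a set" and k \<mu> :: real
  defines "N \<equiv> real (card W)" and "D \<equiv> (\<Sum>u\<in>W. degree_in E W u)"
  assumes W: "finite W" and E: "simple_graph E" and k: "0 < k" and \<mu>: "0 \<le> \<mu>"
    and inner: "\<And>u. u \<in> W \<Longrightarrow>
      k * (\<Sum>a\<in>neighbours E W u. degree_in E (neighbours E W u) a) \<le> (k - 1) * (degree_in E W u)\<^sup>2"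
    and cut: "\<And>u. u \<in> W \<Longrightarrow>
      (\<Sum>a\<in>neighbours E W u. degree_in E (W - neighbours E W u) a)
        \<le> \<mu> * degree_in E W u * (N - degree_in E W u)"
  shows "D * (1 + k * \<mu>) \<le> k * \<mu> * N\<^sup>2"
    and "D * (1 + k * \<mu>) = k * \<mu> * N\<^sup>2 \<Longrightarrow> u \<in> W \<Longrightarrow>
      (\<Sum>a\<in>neighbours E W u. degree_in E (W - neighbours E W u) a)
        = \<mu> * degree_in E W u * (N - degree_in E W u) \<and> degree_in E W u * N = D"
proof -
  define d where "d = degree_in E W"
  define c where "c u = (\<Sum>a\<in>neighbours E W u. degree_in E (W - neighbours E W u) a)" for u
  define \<sigma> where "\<sigma> = (\<Sum>u\<in>W. \<mu> * d u * (N - d u) - c u)"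
  define V where "V = (\<Sum>u\<in>W. (d u - D / N)\<^sup>2)"
  have slack: "N * V * (1 + k * \<mu>) + N * k * \<sigma> \<le> D * (k * \<mu> * N\<^sup>2 - D * (1 + k * \<mu>))"
    using neighbourhood_cut_slack[OF W E inner] by (simp add: \<sigma>_def V_def c_def d_def N_def D_def)
  have \<sigma>_nonneg: "0 \<le> \<sigma>" and V_nonneg: "0 \<le> V"
    using cut by (auto simp: \<sigma>_def V_def c_def d_def intro!: sum_nonneg)
  then have "0 \<le> N * V * (1 + k * \<mu>) + N * k * \<sigma>"
    using k \<mu> by (simp add: N_def)
  then have "0 \<le> D * (k * \<mu> * N\<^sup>2 - D * (1 + k * \<mu>))"
    using slack by linarith
  moreover have "0 \<le> D"
    unfolding D_def degree_in_def by (intro sum_nonneg) simp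
  ultimately show "D * (1 + k * \<mu>) \<le> k * \<mu> * N\<^sup>2"
    using k \<mu> by (cases "D = 0") (simp_all add: zero_le_mult_iff)
  assume eq: "D * (1 + k * \<mu>) = k * \<mu> * N\<^sup>2" and u: "u \<in> W"
  then have "N > 0" using W by (auto simp: N_def card_gt_0_iff)
  have "N * V * (1 + k * \<mu>) + N * k * \<sigma> \<le> 0"
    using slack eq by simp
  then have "V = 0" "\<sigma> = 0"
    using V_nonneg \<sigma>_nonneg \<open>N > 0\<close> k \<mu>
    by (smt (verit) mult_pos_pos mult_nonneg_nonneg)+
  have "(d u - D / N)\<^sup>2 = 0"
    using \<open>V = 0\<close> W u by (simp add: V_def sum_nonneg_eq_0_iff)
  moreover have "\<mu> * d u * (N - d u) - c u = 0"
    using \<open>\<sigma> = 0\<close> W u cut by (subst (asm) \<sigma>_def, subst (asm) sum_nonneg_eq_0_iff) (auto simp: c_def d_def)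
  ultimately show "c u = \<mu> * d u * (N - d u) \<and> d u * N = D"
    using \<open>N > 0\<close> by (simp add: field_simps)
qed

lemma neighbourhood_cut_le:
  assumes "finite W"
  shows "(\<Sum>a\<in>neighbours E W u. degree_in E (W - neighbours E W u) a)
    \<le> degree_in E W u * (real (card W) - degree_in E W u)"
proof -
  have "(\<Sum>a\<in>neighbours E W u. degree_in E (W - neighbours E W u) a)
      \<le> (\<Sum>a\<in>neighbours E W u. real (card (W - neighbours E W u)))"
    using assms by (intro sum_mono degree_in_le_card) simp
  moreover have "neighbours E W u \<subseteq> W"
    by (auto simp: neighbours_def)
  then have "real (card (W - neighbours E W u)) = real (card W) - degree_in E W u"
    using assms by (simp add: card_Diff_subset card_mono degree_in_eq_card finite_subset)
  ultimately show ?thesis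
    using assms by (simp add: degree_in_eq_card)
qed

definition clique :: "('a \<Rightarrow> 'a \<Rightarrow> bool) \<Rightarrow> 'a set \<Rightarrow> bool" where
  "clique E S \<longleftrightarrow> (\<forall>u\<in>S. \<forall>v\<in>S. u \<noteq> v \<longrightarrow> E u v)"

lemma card_clique_in_neighbours_le:
  assumes W: "finite W" and E: "simple_graph E" and u: "u \<in> W"
    and cliques: "\<And>S. S \<subseteq> W \<Longrightarrow> clique E S \<Longrightarrow> card S \<le> Suc k"
    and S: "S \<subseteq> neighbours E W u" "clique E S"
  shows "card S \<le> k"
proof -
  have "S \<subseteq> W" "\<forall>v\<in>S. E u v"
    using S(1) by (auto simp: neighbours_def)
  then have "u \<notin> S" "insert u S \<subseteq> W" "finite S"
    using E u W by (auto simp: simple_graph_def intro: finite_subset)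
  moreover have "clique E (insert u S)"
    using S(2) \<open>\<forall>v\<in>S. E u v\<close> E unfolding clique_def simple_graph_def by blast
  ultimately show ?thesis
    using cliques[of "insert u S"] by simp
qed

lemma card_clique_le_if_not_contains_clique:
  assumes "\<not> contains_clique E (r + 1)" and "finite S" and "clique E S"
  shows "card S \<le> r"
proof (rule ccontr)
  assume "\<not> card S \<le> r"
  then obtain T where "T \<subseteq> S" "card T = r + 1"
    using obtain_subset_with_card_n[of "r + 1" S] by auto
  moreover have "finite T"
    using \<open>T \<subseteq> S\<close> assms(2) by (rule finite_subset)
  moreover have "clique E T"
    using \<open>T \<subseteq> S\<close> assms(3) by (auto simp: clique_def)
  ultimately have "contains_clique E (r + 1)"
    unfolding contains_clique_def clique_def by blast
  with assms(1) show False ..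
qed

theorem turan_degree_sum:
  assumes "finite W" and E: "simple_graph E" and "1 \<le> k"
    and "\<And>S. S \<subseteq> W \<Longrightarrow> clique E S \<Longrightarrow> card S \<le> k"
  shows "real k * (\<Sum>u\<in>W. degree_in E W u) \<le> (real k - 1) * (real (card W))\<^sup>2"
  using assms(3,1,4)
proof (induction k arbitrary: W rule: nat_induct_at_least)
  case base
  have "degree_in E W u = 0" if "u \<in> W" for u
  proof -
    have "\<not> E u v" if "v \<in> W" for v
    proof
      assume "E u v"
      then have "clique E {u, v}" "u \<noteq> v"
        using E by (auto simp: clique_def simple_graph_def)
      then show False
        using base.prems(2)[of "{u, v}"] \<open>u \<in> W\<close> \<open>v \<in> W\<close> by simp
    qed
    then show ?thesis by (simp add: degree_in_def)
  qed
  then show ?case by simp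
next
  case (Suc k)
  let ?N = "neighbours E W"
  have fin: "finite (?N u)" for u
    using Suc.prems(1) by (simp add: neighbours_def)
  have inner: "real k * (\<Sum>a\<in>?N u. degree_in E (?N u) a) \<le> (real k - 1) * (degree_in E W u)\<^sup>2"
    if "u \<in> W" for u
  proof -
    have "card S \<le> k" if "S \<subseteq> ?N u" "clique E S" for S
      by (rule card_clique_in_neighbours_le[OF Suc.prems(1) E \<open>u \<in> W\<close> Suc.prems(2) that])
    with fin have "real k * (\<Sum>a\<in>?N u. degree_in E (?N u) a) \<le> (real k - 1) * (real (card (?N u)))\<^sup>2"
      by (rule Suc.IH)
    then show ?thesis
      by (simp only: degree_in_eq_card[OF Suc.prems(1)])
  qed
  have cut: "(\<Sum>a\<in>?N u. degree_in E (W - ?N u) a)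
      \<le> 1 * degree_in E W u * (real (card W) - degree_in E W u)" if "u \<in> W" for u
    using neighbourhood_cut_le[OF Suc.prems(1)] by simp
  have "0 < real k" using Suc.hyps by simp
  from degree_sum_bound_by_neighbourhood_cuts(1)[OF Suc.prems(1) E this zero_le_one inner cut]
  show ?case by (simp add: algebra_simps)
qed

lemma turan_neighbourhood:
  fixes E :: "'n::finite \<Rightarrow> 'n \<Rightarrow> bool"
  assumes E: "simple_graph E" and r: "2 \<le> r" and cliques: "\<And>S. clique E S \<Longrightarrow> card S \<le> r"
  shows "(real r - 1) * (\<Sum>a\<in>neighbours E UNIV u. degree_in E (neighbours E UNIV u) a)
    \<le> (real r - 2) * (degree_in E UNIV u)\<^sup>2"
proof -
  let ?N = "neighbours E UNIV u"
  have "card S \<le> r - 1" if "S \<subseteq> ?N" "clique E S" for S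
    using card_clique_in_neighbours_le[OF finite E UNIV_I _ that, of "r - 1"] cliques r by simp
  then have "real (r - 1) * (\<Sum>a\<in>?N. degree_in E ?N a) \<le> (real (r - 1) - 1) * (real (card ?N))\<^sup>2"
    using r by (intro turan_degree_sum[OF finite E]) auto
  then show ?thesis
    using r by (simp add: degree_in_eq_card)
qed

section \<open>The Laplacian quadratic form\<close>

lemma laplacian_mult_vec:
  "(laplacian E *v x) $ w = (\<Sum>v\<in>UNIV. of_bool (E w v) * (x $ w - x $ v))"
proof -
  have "(laplacian E *v x) $ w = real (degree E w) * x $ w - (\<Sum>v\<in>UNIV. of_bool (E w v) * x $ v)"
    by (simp add: matrix_vector_mult_def laplacian_def degree_matrix_def adjacency_matrix_def
        left_diff_distrib sum_subtractf of_bool_def if_distrib[of "\<lambda>a. a * _"] cong: if_cong)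
  then show ?thesis
    by (simp add: degree_eq_degree_in degree_in_def right_diff_distrib sum_subtractf sum_distrib_right)
qed

lemma transpose_laplacian: "simple_graph E \<Longrightarrow> transpose (laplacian E) = laplacian E"
  by (auto simp: transpose_def laplacian_def degree_matrix_def adjacency_matrix_def
      simple_graph_def vec_eq_iff)

lemma inner_laplacian:
  assumes "simple_graph E"
  shows "x \<bullet> (laplacian E *v x) = (\<Sum>u\<in>UNIV. \<Sum>v\<in>UNIV. of_bool (E u v) * (x$u - x$v)\<^sup>2) / 2"
proof -
  define s where "s x = (\<Sum>u\<in>UNIV. \<Sum>v\<in>UNIV. of_bool (E u v) * (x$u * (x$u - x$v)))" for x :: "real^'a"
  have "x \<bullet> (laplacian E *v x) = s x"
    by (simp add: s_def inner_vec_def laplacian_mult_vec sum_distrib_left algebra_simps)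
  moreover have "s x = (\<Sum>u\<in>UNIV. \<Sum>v\<in>UNIV. of_bool (E u v) * (x$v * (x$v - x$u)))"
    unfolding s_def using assms
    by (subst sum.swap) (auto simp: simple_graph_def intro!: sum.cong)
  then have "2 * s x = (\<Sum>u\<in>UNIV. \<Sum>v\<in>UNIV.
      of_bool (E u v) * (x$u * (x$u - x$v)) + of_bool (E u v) * (x$v * (x$v - x$u)))"
    by (simp add: s_def sum.distrib)
  also have "\<dots> = (\<Sum>u\<in>UNIV. \<Sum>v\<in>UNIV. of_bool (E u v) * (x$u - x$v)\<^sup>2)"
    by (intro sum.cong refl) (simp add: power2_eq_square algebra_simps)
  finally show ?thesis by simp
qed

lemma inner_laplacian_nonneg: "simple_graph E \<Longrightarrow> 0 \<le> x \<bullet> (laplacian E *v x)"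
  by (simp add: inner_laplacian sum_nonneg)

lemma inner_laplacian_le_card:
  fixes x :: "real^'n::finite"
  assumes "simple_graph E"
  shows "x \<bullet> (laplacian E *v x) \<le> real CARD('n) * (x \<bullet> x)"
proof -
  have "x \<bullet> (laplacian E *v x) \<le> (\<Sum>u\<in>UNIV. \<Sum>v\<in>UNIV. (x$u - x$v)\<^sup>2) / 2"
    unfolding inner_laplacian[OF assms]
    by (intro divide_right_mono sum_mono) (auto simp: of_bool_def)
  also have "\<dots> = (\<Sum>u\<in>UNIV. \<Sum>v\<in>UNIV. (x$u)\<^sup>2 + (x$v)\<^sup>2 - 2 * (x$u * x$v)) / 2"
    by (simp add: power2_diff mult.assoc)
  also have "\<dots> = real CARD('n) * (x \<bullet> x) - (\<Sum>u\<in>UNIV. x$u)\<^sup>2"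
    by (simp add: sum.distrib sum_subtractf sum_product inner_vec_def power2_eq_square
        sum_distrib_left[symmetric])
  also have "\<dots> \<le> real CARD('n) * (x \<bullet> x)"
    by simp
  finally show ?thesis .
qed

lemma inner_laplacian_le_lap_largest_eig:
  "simple_graph E \<Longrightarrow> x \<bullet> (laplacian E *v x) \<le> lap_largest_eig E * (x \<bullet> x)"
  unfolding lap_largest_eig_def by (rule symmetric_Max_eigenvalue(2)[OF transpose_laplacian])

lemma laplacian_eigenvector_if_inner_eq:
  "simple_graph E \<Longrightarrow> x \<bullet> (laplacian E *v x) = lap_largest_eig E * (x \<bullet> x)
    \<Longrightarrow> laplacian E *v x = lap_largest_eig E *\<^sub>R x"
  by (rule symmetric_form_le_eq_imp_eigenvector[OF transpose_laplacian
        inner_laplacian_le_lap_largest_eig])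

lemma lap_largest_eig_attained:
  assumes "simple_graph E"
  obtains x where "x \<noteq> 0" "x \<bullet> (laplacian E *v x) = lap_largest_eig E * (x \<bullet> x)"
proof -
  obtain x where "x \<noteq> 0" "laplacian E *v x = lap_largest_eig E *\<^sub>R x"
    using symmetric_Max_eigenvalue(1)[OF transpose_laplacian[OF assms]]
    unfolding is_eigenvalue_def lap_largest_eig_def by blast
  then show ?thesis using that by simp
qed

lemma lap_largest_eig_nonneg:
  assumes "simple_graph E"
  shows "0 \<le> lap_largest_eig E"
proof -
  obtain x where "x \<noteq> 0" "x \<bullet> (laplacian E *v x) = lap_largest_eig E * (x \<bullet> x)"
    using lap_largest_eig_attained[OF assms] .
  moreover from \<open>x \<noteq> 0\<close> have "0 < x \<bullet> x" by simp
  ultimately show ?thesis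
    using inner_laplacian_nonneg[OF assms, of x]
      mult_le_cancel_right_pos[of "x \<bullet> x" 0 "lap_largest_eig E"] by simp
qed

lemma lap_largest_eig_le_card:
  fixes E :: "'n::finite \<Rightarrow> 'n \<Rightarrow> bool"
  assumes "simple_graph E"
  shows "lap_largest_eig E \<le> real CARD('n)"
proof -
  obtain x where "x \<noteq> 0" "x \<bullet> (laplacian E *v x) = lap_largest_eig E * (x \<bullet> x)"
    using lap_largest_eig_attained[OF assms] .
  then show ?thesis
    using inner_laplacian_le_card[OF assms, of x] by simp
qed

section \<open>The spectral bound and its extremal graphs\<close>

definition centred_indicator :: "'n::finite set \<Rightarrow> real^'n" where
  "centred_indicator S = (\<chi> w. of_bool (w \<in> S) - real (card S) / real CARD('n))"

lemma inner_centred_indicator: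
  "centred_indicator S \<bullet> centred_indicator (S :: 'n::finite set)
    = real (card S) * (real CARD('n) - real (card S)) / real CARD('n)"
proof -
  define c where "c = real (card S) / real CARD('n)"
  have "centred_indicator S \<bullet> centred_indicator S
      = (\<Sum>w\<in>UNIV. of_bool (w \<in> S) - 2 * c * of_bool (w \<in> S) + c\<^sup>2)"
    unfolding inner_vec_def
    by (intro sum.cong) (auto simp: centred_indicator_def c_def power2_eq_square algebra_simps)
  also have "\<dots> = real (card S) - 2 * c * real (card S) + real CARD('n) * c\<^sup>2"
    by (simp add: sum.distrib sum_subtractf sum_distrib_left[symmetric])
  finally show ?thesis
    by (simp add: c_def field_simps power2_eq_square)
qed

lemma laplacian_mult_centred_indicator:
  "(laplacian E *v centred_indicator S) $ w
    = (\<Sum>v\<in>UNIV. of_bool (E w v) * (of_bool (w \<in> S) - of_bool (v \<in> S)))"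
  by (simp add: laplacian_mult_vec centred_indicator_def)

lemma inner_laplacian_centred_indicator:
  assumes "simple_graph E"
  shows "centred_indicator S \<bullet> (laplacian E *v centred_indicator S) = (\<Sum>a\<in>S. degree_in E (UNIV - S) a)"
proof -
  define cut :: real where
    "cut = (\<Sum>u\<in>UNIV. \<Sum>v\<in>UNIV. of_bool (E u v) * (of_bool (u \<in> S) * of_bool (v \<notin> S)))"
  have cut_eq: "cut = (\<Sum>a\<in>S. degree_in E (UNIV - S) a)"
    by (simp add: cut_def degree_in_def sum_distrib_left[symmetric] mult.left_commute
        Int_def Diff_eq conj_commute)
  have swap: "(\<Sum>u\<in>UNIV. \<Sum>v\<in>UNIV. of_bool (E u v) * (of_bool (v \<in> S) * of_bool (u \<notin> S))) = cut"
  proof -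
    have "E v u \<longleftrightarrow> E u v" for u v
      using assms by (auto simp: simple_graph_def)
    then show ?thesis
      unfolding cut_def by (subst sum.swap) (simp only:)
  qed
  have "(\<Sum>u\<in>UNIV. \<Sum>v\<in>UNIV. of_bool (E u v) * (of_bool (u \<in> S) - of_bool (v \<in> S))\<^sup>2)
      = (\<Sum>u\<in>UNIV. \<Sum>v\<in>UNIV. (of_bool (E u v) :: real) * (of_bool (u \<in> S) * of_bool (v \<notin> S))
          + of_bool (E u v) * (of_bool (v \<in> S) * of_bool (u \<notin> S)))"
    by (intro sum.cong refl) (simp add: of_bool_def)
  also have "\<dots> = 2 * cut"
    by (simp only: sum.distrib swap) (simp add: cut_def)
  finally have "(\<Sum>u\<in>UNIV. \<Sum>v\<in>UNIV. of_bool (E u v) * (of_bool (u \<in> S) - of_bool (v \<in> S))\<^sup>2) = 2 * cut" .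
  then show ?thesis
    by (simp add: inner_laplacian[OF assms] centred_indicator_def cut_eq)
qed

lemma neighbourhood_cut_le_lap_largest_eig:
  fixes E :: "'n::finite \<Rightarrow> 'n \<Rightarrow> bool" and u :: 'n
  defines "n \<equiv> real CARD('n)" and "d \<equiv> degree_in E UNIV u"
  assumes E: "simple_graph E"
  shows "(\<Sum>a\<in>neighbours E UNIV u. degree_in E (UNIV - neighbours E UNIV u) a)
      \<le> lap_largest_eig E / n * d * (n - d)"
    and "(\<Sum>a\<in>neighbours E UNIV u. degree_in E (UNIV - neighbours E UNIV u) a)
      = lap_largest_eig E / n * d * (n - d) \<Longrightarrow>
      laplacian E *v centred_indicator {v. E u v} = lap_largest_eig E *\<^sub>R centred_indicator {v. E u v}"
proof -
  define x where "x = centred_indicator {v. E u v}"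
  have N: "neighbours E UNIV u = {v. E u v}"
    by (simp add: neighbours_def)
  have cut: "(\<Sum>a\<in>neighbours E UNIV u. degree_in E (UNIV - neighbours E UNIV u) a)
      = x \<bullet> (laplacian E *v x)"
    by (simp add: x_def N inner_laplacian_centred_indicator[OF E])
  have norm: "lap_largest_eig E / n * d * (n - d) = lap_largest_eig E * (x \<bullet> x)"
    by (simp add: x_def inner_centred_indicator degree_in_eq_card N n_def d_def)
  show "(\<Sum>a\<in>neighbours E UNIV u. degree_in E (UNIV - neighbours E UNIV u) a)
      \<le> lap_largest_eig E / n * d * (n - d)"
    unfolding cut norm by (rule inner_laplacian_le_lap_largest_eig[OF E])
  show "laplacian E *v x = lap_largest_eig E *\<^sub>R x"
    if "(\<Sum>a\<in>neighbours E UNIV u. degree_in E (UNIV - neighbours E UNIV u) a)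
      = lap_largest_eig E / n * d * (n - d)"
    using that unfolding cut norm by (rule laplacian_eigenvector_if_inner_eq[OF E])
qed

lemma lap_largest_eig_lower_bound:
  fixes E :: "'n::finite \<Rightarrow> 'n \<Rightarrow> bool" and r :: nat
  defines "n \<equiv> real CARD('n)" and "D \<equiv> (\<Sum>u\<in>UNIV. real (degree E u))"
  assumes E: "simple_graph E" and r: "2 \<le> r" and cliques: "\<And>S. clique E S \<Longrightarrow> card S \<le> r"
  shows "D * n / ((real r - 1) * (n\<^sup>2 - D)) \<le> lap_largest_eig E"
    and "lap_largest_eig E = D * n / ((real r - 1) * (n\<^sup>2 - D)) \<Longrightarrow>
      laplacian E *v centred_indicator {v. E u v} = lap_largest_eig E *\<^sub>R centred_indicator {v. E u v}
      \<and> real (degree E u) * n = D"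
proof -
  define lam where "lam = lap_largest_eig E"
  define k where "k = real r - 1"
  define \<mu> where "\<mu> = lam / n"
  let ?N = "neighbours E UNIV"
  have n: "0 < n" by (simp add: n_def)
  have k: "0 < k" using r by (simp add: k_def)
  have \<mu>: "0 \<le> \<mu>"
    using lap_largest_eig_nonneg[OF E] n by (simp add: \<mu>_def lam_def)
  have D: "D = (\<Sum>u\<in>UNIV. degree_in E UNIV u)"
    by (simp add: D_def degree_eq_degree_in)
  have inner: "k * (\<Sum>a\<in>?N u. degree_in E (?N u) a) \<le> (k - 1) * (degree_in E UNIV u)\<^sup>2" for u
    using turan_neighbourhood[OF E r cliques, of u] by (simp add: k_def)
  have cut: "(\<Sum>a\<in>?N u. degree_in E (UNIV - ?N u) a)
      \<le> \<mu> * degree_in E UNIV u * (n - degree_in E UNIV u)" for u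
    using neighbourhood_cut_le_lap_largest_eig(1)[OF E, of u] by (simp add: \<mu>_def lam_def n_def)
  note bound =
    degree_sum_bound_by_neighbourhood_cuts[OF finite E k \<mu> inner cut[unfolded n_def], folded D n_def]
  \<comment> \<open>with \<open>\<mu> = \<lambda>\<^sub>n / n\<close> the counting bound is the spectral bound times \<open>k (n\<^sup>2 - D) / n\<close>\<close>
  have den: "0 < k * (n\<^sup>2 - D)"
    using k sum_degree_less_card_sq[OF E] by (simp add: D_def n_def)
  have "n * (k * \<mu> * n\<^sup>2 - D * (1 + k * \<mu>)) = k * (n\<^sup>2 - D) * lam - D * n"
    using n by (simp add: \<mu>_def power2_eq_square field_simps)
  moreover have "k * (n\<^sup>2 - D) * (D * n / (k * (n\<^sup>2 - D))) = D * n"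
    using den by (simp only: times_divide_eq_right nonzero_mult_div_cancel_left less_irrefl)
  ultimately have key:
    "n * (k * \<mu> * n\<^sup>2 - D * (1 + k * \<mu>)) = k * (n\<^sup>2 - D) * (lam - D * n / (k * (n\<^sup>2 - D)))"
    by (simp add: right_diff_distrib)
  have "0 \<le> k * (n\<^sup>2 - D) * (lam - D * n / (k * (n\<^sup>2 - D)))"
    unfolding key[symmetric] using bound(1) n by simp
  then show "D * n / ((real r - 1) * (n\<^sup>2 - D)) \<le> lap_largest_eig E"
    using den by (simp add: zero_le_mult_iff k_def lam_def)
  assume "lap_largest_eig E = D * n / ((real r - 1) * (n\<^sup>2 - D))"
  then have "D * (1 + k * \<mu>) = k * \<mu> * n\<^sup>2"
    using key n by (simp add: k_def lam_def)
  from bound(2)[OF this UNIV_I, of u]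
  show "laplacian E *v centred_indicator {v. E u v} = lap_largest_eig E *\<^sub>R centred_indicator {v. E u v}
      \<and> real (degree E u) * n = D"
    using neighbourhood_cut_le_lap_largest_eig(2)[OF E, of u]
    by (simp add: \<mu>_def lam_def n_def degree_eq_degree_in)
qed

lemma centred_neighbourhood_eigenvector_nested:
  fixes E :: "'n::finite \<Rightarrow> 'n \<Rightarrow> bool"
  assumes E: "simple_graph E" and deg: "0 < degree E u"
    and eig: "laplacian E *v centred_indicator {v. E u v} = lam *\<^sub>R centred_indicator {v. E u v}"
  shows "lam = real CARD('n)" and "\<not> E u w \<Longrightarrow> {v. E u v} \<subseteq> {v. E w v}"
proof -
  \<comment> \<open>at a non-neighbour \<open>w\<close> of \<open>u\<close> the eigenvalue equation counts common neighbours\<close>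
  have common: "real (card {v. E w v \<and> E u v}) = lam * real (degree E u) / real CARD('n)"
    if "\<not> E u w" for w
  proof -
    have "(laplacian E *v centred_indicator {v. E u v}) $ w = - real (card {v. E w v \<and> E u v})"
      using that by (simp add: laplacian_mult_centred_indicator sum_negf of_bool_conj[symmetric])
    moreover have "(lam *\<^sub>R centred_indicator {v. E u v}) $ w = - lam * real (degree E u) / real CARD('n)"
      using that by (simp add: centred_indicator_def degree_def)
    ultimately show ?thesis
      using eig by simp
  qed
  have "\<not> E u u" using E by (simp add: simple_graph_def)
  from common[OF this] deg show lam: "lam = real CARD('n)"
    by (auto simp: degree_def field_simps card_gt_0_iff)
  assume "\<not> E u w"
  from common[OF this] have "card {v. E w v \<and> E u v} = card {v. E u v}"
    by (simp add: lam degree_def)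
  then have "{v. E w v \<and> E u v} = {v. E u v}"
    by (intro card_subset_eq) auto
  then show "{v. E u v} \<subseteq> {v. E w v}" by blast
qed

lemma card_range_partition:
  fixes P :: "'a::finite \<Rightarrow> 'a set" and r :: nat
  assumes self: "\<And>u. u \<in> P u" and eq: "\<And>u w. w \<in> P u \<Longrightarrow> P u = P w"
    and size: "\<And>u. real (card (P u)) = real CARD('a) / real r" and r: "0 < r"
  shows "card (range P) = r"
proof -
  have "pairwise disjnt (range P)"
    unfolding pairwise_def disjnt_def using eq by blast
  moreover have "\<Union>(range P) = UNIV"
    using self by auto
  ultimately have "CARD('a) = (\<Sum>B\<in>range P. card B)"
    using card_Union_disjoint[of "range P"] by simp
  then have "real CARD('a) = (\<Sum>B\<in>range P. real (card B))"
    by simp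
  also have "\<dots> = (\<Sum>B\<in>range P. real CARD('a) / real r)"
    using size by (intro sum.cong) auto
  finally show ?thesis
    using r by (simp add: field_simps)
qed

lemma regular_complete_multipartiteI:
  fixes E :: "'n::finite \<Rightarrow> 'n \<Rightarrow> bool"
  assumes E: "simple_graph E" and r: "0 < r"
    and nested: "\<And>u w. \<not> E u w \<Longrightarrow> {v. E u v} \<subseteq> {v. E w v}"
    and part_size: "\<And>u. real (card {w. \<not> E u w}) = real CARD('n) / real r"
  shows "regular_complete_multipartite E r"
proof -
  define P where "P u = {w. \<not> E u w}" for u
  have sym: "E u v \<longleftrightarrow> E v u" for u v
    using E by (auto simp: simple_graph_def)
  have P_self: "u \<in> P u" for u
    using E by (simp add: P_def simple_graph_def)
  have P_eq_iff: "P u = P v \<longleftrightarrow> \<not> E u v" for u v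
  proof
    assume "P u = P v"
    then have "v \<in> P u" using P_self[of v] by simp
    then show "\<not> E u v" by (simp add: P_def)
  next
    assume "\<not> E u v"
    then show "P u = P v" using nested[of u v] nested[of v u] sym by (auto simp: P_def)
  qed
  have P_eq: "P u = P w" if "w \<in> P u" for u w
    using that unfolding P_eq_iff by (simp add: P_def)
  define K where "K = range P"
  have card_K: "card K = r"
    unfolding K_def using P_self P_eq part_size r by (intro card_range_partition) (auto simp: P_def)
  obtain h where h: "bij_betw h K {0..<r}"
    using ex_bij_betw_finite_nat[of K] card_K by auto
  define f where "f v = h (P v)" for v
  have f_eq_iff: "f u = f v \<longleftrightarrow> \<not> E u v" for u v
    using h by (auto simp: f_def K_def bij_betw_def inj_on_def P_eq_iff[symmetric])
  show ?thesis
    unfolding regular_complete_multipartite_def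
  proof (intro exI[of _ f] conjI allI impI)
    show "f v < r" for v
      using h by (auto simp: f_def K_def bij_betw_def)
    show "E u v \<longleftrightarrow> f u \<noteq> f v" for u v
      by (simp add: f_eq_iff)
    fix i assume "i < r"
    then have "i \<in> h ` K"
      using h by (simp add: bij_betw_def)
    then obtain u where "f u = i"
      by (auto simp: f_def K_def)
    then have "{v. f v = i} = P u"
      by (auto simp: f_eq_iff P_def sym)
    then show "real (card {v. f v = i}) = real CARD('n) / real r"
      by (simp add: P_def part_size)
  qed
qed

lemma degree_if_regular_complete_multipartite:
  fixes E :: "'n::finite \<Rightarrow> 'n \<Rightarrow> bool"
  assumes "regular_complete_multipartite E r"
  shows "real (degree E u) = real CARD('n) - real CARD('n) / real r"
proof -
  obtain f :: "'n \<Rightarrow> nat" where f: "\<And>v. f v < r" "\<And>u v. E u v \<longleftrightarrow> f u \<noteq> f v"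
    "\<And>i. i < r \<Longrightarrow> real (card {v. f v = i}) = real CARD('n) / real r"
    using assms unfolding regular_complete_multipartite_def by blast
  have "{v. E u v} = UNIV - {v. f v = f u}"
    using f(2) by auto
  then have "degree E u = CARD('n) - card {v. f v = f u}"
    by (simp add: degree_def card_Diff_subset)
  then show ?thesis
    using f(3)[OF f(1)] by (simp add: card_mono)
qed

lemma spectral_bound_eq_card_iff:
  fixes n D r :: real
  assumes n: "0 < n" and den: "0 < (r - 1) * (n\<^sup>2 - D)"
  shows "D * n / ((r - 1) * (n\<^sup>2 - D)) = n \<longleftrightarrow> r * D = (r - 1) * n\<^sup>2"
proof -
  have "D * n / ((r - 1) * (n\<^sup>2 - D)) = n \<longleftrightarrow> n * D = n * ((r - 1) * (n\<^sup>2 - D))"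
    using den by (subst nonzero_divide_eq_eq) (auto simp: mult.commute)
  also have "\<dots> \<longleftrightarrow> D = (r - 1) * (n\<^sup>2 - D)"
    using n by simp
  finally show ?thesis
    by (simp add: algebra_simps)
qed

lemma regular_complete_multipartite_if_bound_attained:
  fixes E :: "'n::finite \<Rightarrow> 'n \<Rightarrow> bool" and r :: nat
  defines "n \<equiv> real CARD('n)" and "D \<equiv> (\<Sum>u\<in>UNIV. real (degree E u))"
  assumes E: "simple_graph E" and r: "2 \<le> r" and cliques: "\<And>S. clique E S \<Longrightarrow> card S \<le> r"
    and "0 < D" and attained: "lap_largest_eig E = D * n / ((real r - 1) * (n\<^sup>2 - D))"
  shows "regular_complete_multipartite E r"
proof -
  note extremal = lap_largest_eig_lower_bound(2)[OF E r cliques attained[unfolded n_def D_def],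
      folded n_def D_def]
  have n: "0 < n" by (simp add: n_def)
  have degree: "real (degree E u) = D / n" for u
    using extremal n by (simp add: field_simps)
  then have "0 < real (degree E u)" for u
    using \<open>0 < D\<close> n by simp
  then have "0 < degree E u" for u
    by simp
  then have lam: "lap_largest_eig E = n" and nested: "\<not> E u w \<Longrightarrow> {v. E u v} \<subseteq> {v. E w v}" for u w
    using centred_neighbourhood_eigenvector_nested[OF E _ conjunct1[OF extremal]] by (auto simp: n_def)
  have "0 < (real r - 1) * (n\<^sup>2 - D)"
    using sum_degree_less_card_sq[OF E] r by (simp add: D_def n_def)
  moreover have "D * n / ((real r - 1) * (n\<^sup>2 - D)) = n"
    using attained lam by linarith
  ultimately have turan_number: "real r * D = (real r - 1) * n\<^sup>2"
    using spectral_bound_eq_card_iff[OF n] by blast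
  have part_size: "real (card {w. \<not> E u w}) = n / real r" for u
  proof -
    have "{w. \<not> E u w} = UNIV - {v. E u v}" by auto
    then have "real (card {w. \<not> E u w}) = n - D / n"
      using degree[of u] by (simp add: n_def degree_def card_Diff_subset card_mono)
    also have "\<dots> = n / real r"
      using turan_number n r by (simp add: field_simps power2_eq_square)
    finally show ?thesis .
  qed
  show ?thesis
    using r by (intro regular_complete_multipartiteI[OF E _ nested part_size[unfolded n_def]]) auto
qed

lemma lap_largest_eig_eq_bound_if_regular_complete_multipartite:
  fixes E :: "'n::finite \<Rightarrow> 'n \<Rightarrow> bool" and r :: nat
  defines "n \<equiv> real CARD('n)" and "D \<equiv> (\<Sum>u\<in>UNIV. real (degree E u))"
  assumes E: "simple_graph E" and r: "2 \<le> r" and cliques: "\<And>S. clique E S \<Longrightarrow> card S \<le> r"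
    and "regular_complete_multipartite E r"
  shows "lap_largest_eig E = D * n / ((real r - 1) * (n\<^sup>2 - D))"
proof -
  have "D = n * (n - n / real r)"
    using degree_if_regular_complete_multipartite[OF assms(6)] by (simp add: D_def n_def)
  then have "real r * D = (real r - 1) * n\<^sup>2"
    using r by (simp add: field_simps power2_eq_square)
  moreover have "0 < (real r - 1) * (n\<^sup>2 - D)"
    using sum_degree_less_card_sq[OF E] r by (simp add: D_def n_def)
  ultimately have "D * n / ((real r - 1) * (n\<^sup>2 - D)) = n"
    using spectral_bound_eq_card_iff[of n] by (simp add: n_def)
  then show ?thesis
    using lap_largest_eig_lower_bound(1)[OF E r cliques] lap_largest_eig_le_card[OF E]
    by (simp add: D_def n_def)
qed

theorem theorem1:
  fixes E :: "'n::finite \<Rightarrow> 'n \<Rightarrow> bool" and r :: nat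
  assumes "simple_graph E"
    and "r \<ge> 2"
    and "\<not> contains_clique E (r + 1)"
    and "card (edges E) \<ge> 1"
  shows "lap_largest_eig E \<ge>
           2 * real (card (edges E)) * real CARD('n) /
             ((real r - 1) * (real CARD('n) ^ 2 - 2 * real (card (edges E)))) \<and>
         (lap_largest_eig E =
           2 * real (card (edges E)) * real CARD('n) /
             ((real r - 1) * (real CARD('n) ^ 2 - 2 * real (card (edges E))))
         \<longleftrightarrow> regular_complete_multipartite E r)"
proof -
  have cliques: "\<And>S. clique E S \<Longrightarrow> card S \<le> r"
    using card_clique_le_if_not_contains_clique[OF assms(3) finite] .
  have D: "(\<Sum>u\<in>UNIV. real (degree E u)) = 2 * real (card (edges E))"
    by (rule sum_degree_eq_card_edges[OF assms(1)])
  then have "0 < (\<Sum>u\<in>UNIV. real (degree E u))"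
    using assms(4) by simp
  then show ?thesis
    using lap_largest_eig_lower_bound(1)[OF assms(1,2) cliques]
      regular_complete_multipartite_if_bound_attained[OF assms(1,2) cliques]
      lap_largest_eig_eq_bound_if_regular_complete_multipartite[OF assms(1,2) cliques]
    unfolding D by blast
qed

end
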